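(* Let $d\geq1$, let $\mathcal{D}$ be a dyadic lattice in $\mathbb{R}^d$, and fix $j\in\{1,\dots,3^d\}$. Suppose $f,g,h$ are bounded compactly supported functions supported in a cube $\tilde{Q}\in\mathcal{D}$. Then, if $Q_0\in\mathcal{D}$ is a sufficiently large ancestor of $\tilde{Q}$, \[ \langle \mathcal{A}_{*,Q'}^j(f,g),h\rangle=0\quad\text{for all } Q'\in\mathcal{D} \text{ with } Q_0\subset Q'. \]
   Context: $d\sigma$ is the normalized surface measure on $S^{2d-1}\subset\mathbb{R}^d\times\mathbb{R}^d$ and $\mathcal{A}_t(f,g)(x)=\int_{S^{2d-1}} f(x-ty)g(x-tz)\,d\sigma(y,z)$. A dyadic lattice $\mathcal{D}$ is a collection of cubes with sidelengths $2^m$, $m\in\mathbb{Z}$, such that the cubes of each fixed sidelength partition $\mathbb{R}^d$ and each cube of sidelength $2^m$ is the union of $2^d$ cubes of $\mathcal{D}$ of sidelength $2^{m-1}$. For $Q\in\mathcal{D}$ with $\ell(Q)=2^m$, $\frac13Q$ is the concentric cube of sidelength $\ell(Q)/3$, and $(\frac13Q)(1),\dots,(\frac13Q)(3^d)$ is a fixed enumeration (by relative position) of the $3^d$ cubes of sidelength $\ell(Q)/3$ partitioning $Q$ into a $3\times\cdots\times3$ grid. Define $\mathcal{A}^j_{*,Q}(f,g)(x)=\sup_{t\in[2^{m-4},2^{m-3}]}\mathcal{A}_t(f\chi_{\frac13Q},g\chi_{(\frac13Q)(j)})(x)$. $\langle\cdot,\cdot\rangle$ is the $L^2$ pairing. 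*)

theory Defs
  imports "HOL-Analysis.Analysis"
begin

definition hcube :: "real^'n \<Rightarrow> real \<Rightarrow> (real^'n) set" where
  "hcube a l = {x. \<forall>i. a$i \<le> x$i \<and> x$i < a$i + l}"

definition dyadic_cube :: "(real^'n) set \<Rightarrow> int \<Rightarrow> bool" where
  "dyadic_cube Q m \<longleftrightarrow> (\<exists>a. Q = hcube a (2 powr of_int m))"

definition dyadic_lattice :: "(real^'n) set set \<Rightarrow> bool" where
  "dyadic_lattice D \<longleftrightarrow>
     (\<forall>Q\<in>D. \<exists>m::int. dyadic_cube Q m) \<and>
     (\<forall>m::int. \<forall>x. \<exists>!Q. Q \<in> D \<and> dyadic_cube Q m \<and> x \<in> Q) \<and>
     (\<forall>Q\<in>D. \<forall>m::int. dyadic_cube Q m \<longrightarrow>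
        (\<exists>C. C \<subseteq> D \<and> card C = 2 ^ CARD('n) \<and> (\<forall>Q'\<in>C. dyadic_cube Q' (m - 1)) \<and> \<Union>C = Q))"

text \<open>Normalized surface measure on the unit sphere of a Euclidean space, realised as the
  push-forward of normalized Lebesgue measure on the unit ball under radial projection.\<close>
definition sphere_measure :: "('a::euclidean_space) measure" where
  "sphere_measure = distr (uniform_measure lborel (ball 0 1)) borel (\<lambda>w. w /\<^sub>R norm w)"

definition sph_avg :: "real \<Rightarrow> (real^'n \<Rightarrow> real) \<Rightarrow> (real^'n \<Rightarrow> real) \<Rightarrow> real^'n \<Rightarrow> real" where
  "sph_avg t f g x =
     (\<integral>w. f (x - t *\<^sub>R fst w) * g (x - t *\<^sub>R snd w) \<partial>(sphere_measure :: ((real^'n) \<times> (real^'n)) measure))"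

text \<open>For Q = hcube a (2^m): the middle third (1/3)Q and the subcube at relative
  position k \<in> {0,1,2}^d of the 3x...x3 grid.\<close>
definition third_mid :: "real^'n \<Rightarrow> int \<Rightarrow> (real^'n) set" where
  "third_mid a m = hcube (\<chi> i. a$i + 2 powr of_int m / 3) (2 powr of_int m / 3)"

definition third_sub :: "real^'n \<Rightarrow> int \<Rightarrow> ('n \<Rightarrow> nat) \<Rightarrow> (real^'n) set" where
  "third_sub a m k = hcube (\<chi> i. a$i + real (k i) * (2 powr of_int m / 3)) (2 powr of_int m / 3)"

text \<open>Localized maximal operator A^j_{*,Q}(f,g)(x) for Q = hcube a (2^m), j given by position k.\<close>
definition loc_max :: "real^'n \<Rightarrow> int \<Rightarrow> ('n \<Rightarrow> nat) \<Rightarrow> (real^'n \<Rightarrow> real) \<Rightarrow> (real^'n \<Rightarrow> real) \<Rightarrow> real^'n \<Rightarrow> real" where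
  "loc_max a m k f g x =
     (SUP t\<in>{2 powr (of_int m - 4) .. 2 powr (of_int m - 3)}.
        sph_avg t (\<lambda>y. f y * indicator (third_mid a m) y) (\<lambda>y. g y * indicator (third_sub a m k) y) x)"

end

theory Submission
  imports Defs
begin

text \<open>A point (y, z) of the unit sphere in \<open>\<real>\<^sup>d \<times> \<real>\<^sup>d\<close> has \<open>|y| \<ge> 1/2\<close> or \<open>|z| \<ge> 1/2\<close>, since
  \<open>|y|\<^sup>2 + |z|\<^sup>2 = 1\<close>. So once t is large compared with the side of \<open>Q\<^sup>~\<close>, for every x in \<open>Q\<^sup>~\<close>
  one of \<open>x - ty\<close>, \<open>x - tz\<close> leaves \<open>Q\<^sup>~\<close>, and the integrand of \<open>\<A>\<^sub>t(f,g)(x)\<close> vanishes almost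
  everywhere.\<close>

lemma AE_sphere_measure_norm_eq_1:
  "AE v in (sphere_measure :: 'a::euclidean_space measure). norm v = 1"
proof (rule AE_I')
  have "(\<lambda>w::'a. w /\<^sub>R norm w) -` (- sphere 0 1) = {0}"
    by (auto simp: norm_divide field_simps split: if_splits)
  then have "emeasure (sphere_measure :: 'a measure) (- sphere 0 1)
      = emeasure (uniform_measure lborel (ball (0::'a) 1)) {0}"
    unfolding sphere_measure_def by (subst emeasure_distr) auto
  also have "\<dots> = 0"
    by (subst emeasure_uniform_measure) auto
  finally show "- sphere 0 1 \<in> null_sets (sphere_measure :: 'a measure)"
    by (auto simp: null_sets_def sphere_measure_def)
qed auto

lemma norm_eq_1_imp_norm_fst_or_snd_ge_half:
  fixes w :: "'a::real_normed_vector \<times> 'b::real_normed_vector"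
  assumes "norm w = 1"
  shows "1/2 \<le> norm (fst w) \<or> 1/2 \<le> norm (snd w)"
proof (rule ccontr)
  assume "\<not> ?thesis"
  then have "norm (fst w) ^ 2 < (1/2) ^ 2" "norm (snd w) ^ 2 < (1/2) ^ 2"
    by (auto intro!: power_strict_mono)
  moreover have "norm (fst w) ^ 2 + norm (snd w) ^ 2 = 1"
    using assms by (cases w) (simp add: norm_Pair)
  ultimately show False by (simp add: power2_eq_square)
qed

lemma sph_avg_eq_0_if_supported_in_ball:
  fixes F G :: "real^'n \<Rightarrow> real"
  assumes F: "\<And>y. y \<notin> ball x (t/2) \<Longrightarrow> F y = 0"
    and G: "\<And>y. y \<notin> ball x (t/2) \<Longrightarrow> G y = 0"
  shows "sph_avg t F G x = 0"
  unfolding sph_avg_def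
proof (rule integral_eq_zero_AE)
  have outside: "x - t *\<^sub>R u \<notin> ball x (t/2)" if "1/2 \<le> norm u" for u :: "real^'n"
  proof
    assume "x - t *\<^sub>R u \<in> ball x (t/2)"
    then have "\<bar>t\<bar> * norm u < t/2" by (simp add: dist_norm)
    moreover have "\<bar>t\<bar> / 2 \<le> \<bar>t\<bar> * norm u"
      using mult_left_mono[OF that, of "\<bar>t\<bar>"] by simp
    ultimately show False by linarith
  qed
  show "AE w in (sphere_measure :: ((real^'n) \<times> (real^'n)) measure).
          F (x - t *\<^sub>R fst w) * G (x - t *\<^sub>R snd w) = 0"
    using AE_sphere_measure_norm_eq_1
    by eventually_elim (use norm_eq_1_imp_norm_fst_or_snd_ge_half outside F G in fastforce)
qed

lemma hcube_subset_ball: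
  fixes x :: "real^'n"
  assumes "x \<in> hcube b L"
  shows "hcube b L \<subseteq> ball x (real CARD('n) * L)"
proof
  fix y assume y: "y \<in> hcube b L"
  have "dist x y \<le> (\<Sum>i\<in>UNIV. \<bar>(x - y)$i\<bar>)"
    unfolding dist_norm by (rule norm_le_l1_cart)
  also have "\<dots> < (\<Sum>i\<in>(UNIV::'n set). L)"
  proof (rule sum_strict_mono)
    show "\<bar>(x - y)$i\<bar> < L" for i
      using assms y unfolding hcube_def by (auto simp: abs_less_iff) (smt (verit))+
  qed auto
  finally show "y \<in> ball x (real CARD('n) * L)" by simp
qed

lemma hcube_subset_imp_side_le:
  fixes c a :: "real^'n"
  assumes sub: "hcube c L \<subseteq> hcube a L'" and "0 < L" "0 < L'"
  shows "L \<le> L'"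
proof (rule ccontr)
  assume "\<not> L \<le> L'"
  then have "c \<in> hcube c L" "(\<chi> i. c$i + L') \<in> hcube c L"
    using \<open>0 < L\<close> \<open>0 < L'\<close> by (auto simp: hcube_def)
  then have "c \<in> hcube a L'" "(\<chi> i. c$i + L') \<in> hcube a L'"
    using sub by blast+
  then have "a$i \<le> c$i" "c$i + L' < a$i + L'" for i
    by (auto simp: hcube_def)
  then show False by (meson add_less_cancel_right not_le)
qed

lemma card_mult_two_powr_le:
  fixes e :: real and N :: nat
  shows "real N * 2 powr e \<le> 2 powr (e + real N)"
proof -
  have "real N \<le> 2 powr real N"
    using less_exp[of N] by (simp add: powr_realpow)
  then show ?thesis by (simp add: powr_add)
qed

lemma loc_max_eq_0_on_small_cube:
  fixes f g :: "real^'n \<Rightarrow> real"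
  assumes x: "x \<in> hcube b (2 powr mt)"
    and f: "\<forall>y. y \<notin> hcube b (2 powr mt) \<longrightarrow> f y = 0"
    and g: "\<forall>y. y \<notin> hcube b (2 powr mt) \<longrightarrow> g y = 0"
    and m: "mt + 5 + int CARD('n) \<le> m"
  shows "loc_max a m k f g x = 0"
proof -
  have "2 * (real CARD('n) * 2 powr mt) \<le> 2 * 2 powr (mt + real CARD('n))"
    using card_mult_two_powr_le by simp
  also have "\<dots> = 2 powr (mt + real CARD('n) + 1)"
    by (simp add: powr_add)
  also have "\<dots> \<le> 2 powr (m - 4)"
    by (rule powr_mono) (use m in auto)
  finally have cube_in_ball: "hcube b (2 powr mt) \<subseteq> ball x (t/2)"
    if "2 powr (m - 4) \<le> t" for t
    using hcube_subset_ball[OF x] that by (auto simp: subset_iff)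
  have "loc_max a m k f g x = (SUP t\<in>{2 powr (m - 4) .. 2 powr (m - 3)}. 0::real)"
    unfolding loc_max_def
    by (intro SUP_cong refl sph_avg_eq_0_if_supported_in_ball)
       (use cube_in_ball f g in \<open>auto simp: subset_iff\<close>)
  then show ?thesis by simp
qed

theorem lemma4p1:
  fixes D :: "(real^'n) set set" and k :: "'n \<Rightarrow> nat"
    and f g h :: "real^'n \<Rightarrow> real" and Qt :: "(real^'n) set"
  assumes "dyadic_lattice D"
    and "\<forall>i. k i < 3"
    and "f \<in> borel_measurable lborel" "g \<in> borel_measurable lborel" "h \<in> borel_measurable lborel"
    and "bounded (range f)" "bounded (range g)" "bounded (range h)"
    and "Qt \<in> D"
    and "\<forall>x. x \<notin> Qt \<longrightarrow> f x = 0" "\<forall>x. x \<notin> Qt \<longrightarrow> g x = 0" "\<forall>x. x \<notin> Qt \<longrightarrow> h x = 0"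
  shows "\<exists>M::int. \<forall>Q0\<in>D. \<forall>m0. dyadic_cube Q0 m0 \<and> Qt \<subseteq> Q0 \<and> M \<le> m0 \<longrightarrow>
           (\<forall>Q'\<in>D. \<forall>a m. Q' = hcube a (2 powr of_int m) \<and> Q0 \<subseteq> Q' \<longrightarrow>
              has_bochner_integral lborel (\<lambda>x. loc_max a m k f g x * h x) 0)"
proof -
  obtain mt where "dyadic_cube Qt mt"
    using assms(1,9) unfolding dyadic_lattice_def by blast
  then obtain b where Qt: "Qt = hcube b (2 powr mt)"
    unfolding dyadic_cube_def by blast
  show ?thesis
  proof (intro exI[of _ "mt + 5 + int CARD('n)"] ballI allI impI, elim conjE)
    fix Q0 Q' and m0 m :: int and a :: "real^'n"
    assume "dyadic_cube Q0 m0" "mt + 5 + int CARD('n) \<le> m0"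
      and "Q' = hcube a (2 powr m)" "Q0 \<subseteq> Q'"
    then obtain c where "hcube c (2 powr m0) \<subseteq> hcube a (2 powr m)"
      unfolding dyadic_cube_def by blast
    then have "(2::real) powr m0 \<le> 2 powr m"
      by (rule hcube_subset_imp_side_le) auto
    then have m: "mt + 5 + int CARD('n) \<le> m"
      using \<open>mt + 5 + int CARD('n) \<le> m0\<close> by simp
    have "loc_max a m k f g x * h x = 0" for x
    proof (cases "x \<in> Qt")
      case True
      then show ?thesis
        using loc_max_eq_0_on_small_cube[OF _ _ _ m] assms(10,11) Qt by simp
    qed (simp add: assms(12))
    then have "(\<lambda>x. loc_max a m k f g x * h x) = (\<lambda>_. 0)"
      by (rule ext)
    then show "has_bochner_integral lborel (\<lambda>x. loc_max a m k f g x * h x) 0"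
      by (simp add: has_bochner_integral_zero)
  qed
qed

end
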